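(* Let $T>0$ and $\mathbf{u}\in C([0,T];X)$. Then for every $t\in[0,T]$ the map $(\mathbf{y},\mathbf{x})\mapsto\gamma(\mathbf{u})(\mathbf{y},\mathbf{x},t)$ on $\Omega\times\Omega$ is measurable, and for almost all $(\mathbf{y},\mathbf{x})$ the map $t\mapsto\gamma(\mathbf{u})(\mathbf{y},\mathbf{x},t)$ is continuous on $[0,T]$. Moreover, there is a constant $C$, independent of the vector fields, such that for all $\mathbf{u},\mathbf{w}\in C([0,T];X)$, almost all $(\mathbf{y},\mathbf{x})\in\Omega\times\Omega$ with $|\mathbf{y}-\mathbf{x}|<\epsilon$, and all $t\in[0,T]$, $$|\gamma(\mathbf{u})(\mathbf{y},\mathbf{x},t)-\gamma(\mathbf{w})(\mathbf{y},\mathbf{x},t)|\le \|\mathbf{u}-\mathbf{w}\|_{C([0,T];X)}\,\frac{C}{|\mathbf{y}-\mathbf{x}|}.$$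
   Context: Let $d\in\{2,3\}$, $\Omega\subset\mathbb{R}^d$ a bounded domain, $\epsilon>0$ a horizon, $L>0$ a length and $\overline{\mu}>0$. For a time-dependent displacement $\mathbf{u}(t,\cdot):\Omega\to\mathbb{R}^d$ and $\mathbf{y}\ne\mathbf{x}$, with $\mathbf{e}=(\mathbf{y}-\mathbf{x})/|\mathbf{y}-\mathbf{x}|$, the strain is $S(\mathbf{y},\mathbf{x},\mathbf{u}(t))=(\mathbf{u}(t,\mathbf{y})-\mathbf{u}(t,\mathbf{x}))\cdot\mathbf{e}/|\mathbf{y}-\mathbf{x}|$, the memory strain is $S^*(t,\mathbf{y},\mathbf{x},\mathbf{u})=\max_{0\le\tau\le t}S(\mathbf{y},\mathbf{x},\mathbf{u}(\tau))$ and $r^*=\sqrt{|\mathbf{y}-\mathbf{x}|/L}\,S^*(t,\mathbf{y},\mathbf{x},\mathbf{u})$. The failure envelope is the derivative $g'$ of a convex–concave potential $g$ with parameters $0<r^L\le r^C<r^F$: $g'(r)=\overline{\mu}r$ for $r\le r^L$, $g'$ becomes nonlinear beyond $r^L$ (strain hardening between $r^L$ and $r^C$) and decreases to $0$ at $r^F$, with $g'(r)=0$ for $r\ge r^F$ (e.g. the bilinear law $g'(r)=\overline{\mu}r$ for $r<r^C$, $g'(r)=\overline{\mu}r^C\frac{r^F-r}{r^F-r^C}$ for $r^C\le r\le r^F$, $0$ for $r>r^F$). The two-point phase field is $\gamma(\mathbf{u})(\mathbf{y},\mathbf{x},t)=\frac{g'(r^* )}{\overline{\mu}\,r^*}\in[0,1]$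 (equal to $1$ when $r^*\le r^L$). Let $\mathcal{U}=\{\mathbb{Q}\mathbf{x}+\mathbf{c}:\ \mathbb{Q}^T=-\mathbb{Q}\}$ be the rigid motions and $X$ the subspace of $L^\infty(\Omega;\mathbb{R}^d)$ of fields $L^2$-orthogonal to $\mathcal{U}$; $C([0,T];X)$ has norm $\sup_{0\le t\le T}\|\mathbf{u}(t)\|_{L^\infty}$. *)

theory Defs
  imports "HOL-Analysis.Analysis"
begin

definition strain :: "('a::euclidean_space \<Rightarrow> 'a) \<Rightarrow> 'a \<Rightarrow> 'a \<Rightarrow> real" where
  "strain v y x = ((v y - v x) \<bullet> ((y - x) /\<^sub>R norm (y - x))) / norm (y - x)"

definition mem_strain :: "(real \<Rightarrow> 'a::euclidean_space \<Rightarrow> 'a) \<Rightarrow> real \<Rightarrow> 'a \<Rightarrow> 'a \<Rightarrow> real" where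
  "mem_strain u t y x = (SUP \<tau>\<in>{0..t}. strain (u \<tau>) y x)"

definition rstar :: "real \<Rightarrow> (real \<Rightarrow> 'a::euclidean_space \<Rightarrow> 'a) \<Rightarrow> real \<Rightarrow> 'a \<Rightarrow> 'a \<Rightarrow> real" where
  "rstar L u t y x = sqrt (norm (y - x) / L) * mem_strain u t y x"

definition phase_field ::
  "(real \<Rightarrow> real) \<Rightarrow> real \<Rightarrow> real \<Rightarrow> real \<Rightarrow> (real \<Rightarrow> 'a::euclidean_space \<Rightarrow> 'a) \<Rightarrow> 'a \<Rightarrow> 'a \<Rightarrow> real \<Rightarrow> real"
  where
  "phase_field gp mu rL L u y x t =
     (let r = rstar L u t y x in if r \<le> rL then 1 else gp r / (mu * r))"

text \<open>Failure envelope g' = derivative of a convex-concave potential g with parameters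
  0 < r^L <= r^C < r^F.\<close>
definition failure_envelope :: "(real \<Rightarrow> real) \<Rightarrow> real \<Rightarrow> real \<Rightarrow> real \<Rightarrow> real \<Rightarrow> bool" where
  "failure_envelope gp mu rL rC rF \<longleftrightarrow>
     0 < mu \<and> 0 < rL \<and> rL \<le> rC \<and> rC < rF \<and>
     (\<forall>r. r \<le> rL \<longrightarrow> gp r = mu * r) \<and>
     (\<forall>r. rF \<le> r \<longrightarrow> gp r = 0) \<and>
     (\<forall>r s. r \<le> s \<and> s \<le> rC \<longrightarrow> gp r \<le> gp s) \<and>
     (\<forall>r s. rC \<le> r \<and> r \<le> s \<longrightarrow> gp s \<le> gp r) \<and>
     (\<forall>r. 0 \<le> r \<longrightarrow> 0 \<le> gp r \<and> gp r \<le> mu * r) \<and>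
     (\<exists>K. \<forall>r s. \<bar>gp r - gp s\<bar> \<le> K * \<bar>r - s\<bar>)"

text \<open>Rigid motions: x \<mapsto> Q x + c with Q linear and skew-symmetric.\<close>
definition skew :: "('a::euclidean_space \<Rightarrow> 'a) \<Rightarrow> bool" where
  "skew Q \<longleftrightarrow> linear Q \<and> (\<forall>a b. Q a \<bullet> b = - (a \<bullet> Q b))"

definition orth_rigid :: "'a::euclidean_space set \<Rightarrow> ('a \<Rightarrow> 'a) \<Rightarrow> bool" where
  "orth_rigid \<Omega> v \<longleftrightarrow> (\<forall>Q c. skew Q \<longrightarrow> (LINT x:\<Omega>|lebesgue. v x \<bullet> (Q x + c)) = 0)"

definition in_X :: "'a::euclidean_space set \<Rightarrow> ('a \<Rightarrow> 'a) \<Rightarrow> bool" where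
  "in_X \<Omega> v \<longleftrightarrow> v \<in> borel_measurable (lebesgue_on \<Omega>) \<and> (\<exists>B. \<forall>x\<in>\<Omega>. norm (v x) \<le> B)
                 \<and> orth_rigid \<Omega> v"

definition supnorm :: "'a::euclidean_space set \<Rightarrow> ('a \<Rightarrow> 'a) \<Rightarrow> real" where
  "supnorm \<Omega> v = (SUP x\<in>\<Omega>. norm (v x))"

definition in_CX :: "'a::euclidean_space set \<Rightarrow> real \<Rightarrow> (real \<Rightarrow> 'a \<Rightarrow> 'a) \<Rightarrow> bool" where
  "in_CX \<Omega> T u \<longleftrightarrow> (\<forall>t\<in>{0..T}. in_X \<Omega> (u t)) \<and>
     (\<forall>t\<in>{0..T}. \<forall>e>0. \<exists>\<delta>>0. \<forall>s\<in>{0..T}. \<bar>s - t\<bar> < \<delta> \<longrightarrow>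
        supnorm \<Omega> (\<lambda>x. u s x - u t x) < e)"

definition CX_norm :: "'a::euclidean_space set \<Rightarrow> real \<Rightarrow> (real \<Rightarrow> 'a \<Rightarrow> 'a) \<Rightarrow> real" where
  "CX_norm \<Omega> T u = (SUP t\<in>{0..T}. supnorm \<Omega> (u t))"

end

theory Submission
  imports Defs
begin

text \<open>
  The phase field is \<open>h(r*)\<close> for the profile \<open>h r = 1\<close> (\<open>r \<le> r\<^sup>L\<close>), \<open>h r = g'(r) / (\<mu> r)\<close>
  (\<open>r > r\<^sup>L\<close>), which is globally Lipschitz: \<open>g'\<close> is Lipschitz, \<open>0 \<le> g'(r) \<le> \<mu> r\<close>, and \<open>r\<close>
  stays away from \<open>0\<close> above \<open>r\<^sup>L\<close>. The memory strain is the running maximum of a function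
  continuous in time, hence continuous in \<open>t\<close>; it is also the supremum over rational times only,
  hence measurable in \<open>(y, x)\<close>. Two fields whose difference is bounded by \<open>N\<close> have strains, and
  therefore memory strains, differing by at most \<open>2 N / |y - x|\<close>; the factor
  \<open>sqrt (|y - x| / L) \<le> sqrt (\<epsilon> / L)\<close> then gives the estimate with \<open>C = 2 Lip(h) sqrt (\<epsilon> / L)\<close>.
\<close>

lemma measurable_lebesgue_completionI:
  assumes f: "f \<in> (lborel :: 'a::euclidean_space measure) \<rightarrow>\<^sub>M (lborel :: 'b::euclidean_space measure)"
    and null: "\<And>N. N \<in> null_sets lborel \<Longrightarrow> f -` N \<in> null_sets lborel"
  shows "f \<in> lebesgue \<rightarrow>\<^sub>M lebesgue"
proof (rule completion.measurable_completion2)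
  show f': "f \<in> lebesgue \<rightarrow>\<^sub>M lborel"
    using f by (rule measurable_completion)
  show "null_sets lborel \<subseteq> null_sets (distr lebesgue lborel f)"
    using null f' by (auto simp: null_sets_def emeasure_distr intro: null_sets_completionI)
qed

lemma measurable_fst_lebesgue:
  "fst \<in> (lebesgue :: ('a::euclidean_space \<times> 'b::euclidean_space) measure) \<rightarrow>\<^sub>M lebesgue"
proof (rule measurable_lebesgue_completionI)
  show "fst \<in> (lborel :: ('a \<times> 'b) measure) \<rightarrow>\<^sub>M lborel"
    by (simp flip: lborel_prod)
  fix N :: "'a set" assume "N \<in> null_sets lborel"
  then have "N \<times> UNIV \<in> null_sets (lborel \<Otimes>\<^sub>M (lborel :: 'b measure))"
    by (intro lborel.times_in_null_sets1) auto
  moreover have "fst -` N = N \<times> (UNIV :: 'b set)" by auto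
  ultimately show "fst -` N \<in> null_sets (lborel :: ('a \<times> 'b) measure)"
    by (simp add: lborel_prod)
qed

lemma measurable_snd_lebesgue:
  "snd \<in> (lebesgue :: ('a::euclidean_space \<times> 'b::euclidean_space) measure) \<rightarrow>\<^sub>M lebesgue"
proof (rule measurable_lebesgue_completionI)
  show "snd \<in> (lborel :: ('a \<times> 'b) measure) \<rightarrow>\<^sub>M lborel"
    by (simp flip: lborel_prod)
  fix N :: "'b set" assume "N \<in> null_sets lborel"
  then have "UNIV \<times> N \<in> null_sets ((lborel :: 'a measure) \<Otimes>\<^sub>M lborel)"
    by (intro lborel.times_in_null_sets2) auto
  moreover have "snd -` N = (UNIV :: 'a set) \<times> N" by auto
  ultimately show "snd -` N \<in> null_sets (lborel :: ('a \<times> 'b) measure)"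
    by (simp add: lborel_prod)
qed

lemma measurable_fst_lebesgue_on:
  "fst \<in> lebesgue_on (A \<times> B) \<rightarrow>\<^sub>M lebesgue_on (A :: 'a::euclidean_space set)"
  for B :: "'b::euclidean_space set"
  by (intro measurable_restrict_space2 measurable_restrict_space1 measurable_fst_lebesgue) auto

lemma measurable_snd_lebesgue_on:
  "snd \<in> lebesgue_on (A \<times> B) \<rightarrow>\<^sub>M lebesgue_on (B :: 'b::euclidean_space set)"
  for A :: "'a::euclidean_space set"
  by (intro measurable_restrict_space2 measurable_restrict_space1 measurable_snd_lebesgue) auto

lemma borel_measurable_fst_lebesgue_on [measurable]:
  "(fst :: 'a::euclidean_space \<times> 'b::euclidean_space \<Rightarrow> 'a) \<in> borel_measurable (lebesgue_on S)"
  by (auto intro!: measurable_restrict_space1 measurable_completion borel_measurable_continuous_onI continuous_intros)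

lemma borel_measurable_snd_lebesgue_on [measurable]:
  "(snd :: 'a::euclidean_space \<times> 'b::euclidean_space \<Rightarrow> 'b) \<in> borel_measurable (lebesgue_on S)"
  by (auto intro!: measurable_restrict_space1 measurable_completion borel_measurable_continuous_onI continuous_intros)

lemma strain_measurable:
  fixes v :: "'a::euclidean_space \<Rightarrow> 'a"
  assumes "v \<in> borel_measurable (lebesgue_on A)"
  shows "(\<lambda>p. strain v (fst p) (snd p)) \<in> borel_measurable (lebesgue_on (A \<times> A))"
proof -
  have [measurable]: "(\<lambda>p. v (fst p)) \<in> borel_measurable (lebesgue_on (A \<times> A))"
    using measurable_compose[OF measurable_fst_lebesgue_on[of A A] assms] by (simp add: o_def)
  have [measurable]: "(\<lambda>p. v (snd p)) \<in> borel_measurable (lebesgue_on (A \<times> A))"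
    using measurable_compose[OF measurable_snd_lebesgue_on[of A A] assms] by (simp add: o_def)
  show ?thesis unfolding strain_def by measurable
qed

lemma bdd_above_continuous_image_atLeastAtMost:
  fixes f :: "real \<Rightarrow> real"
  assumes "continuous_on {a..b} f"
  shows "bdd_above (f ` {a..b})"
  using assms by (intro bounded_imp_bdd_above compact_imp_bounded compact_continuous_image) auto

lemma cSUP_abs_diff_le:
  fixes f g :: "'a \<Rightarrow> real"
  assumes "S \<noteq> {}" "bdd_above (f ` S)" "bdd_above (g ` S)" "\<And>x. x \<in> S \<Longrightarrow> \<bar>f x - g x\<bar> \<le> B"
  shows "\<bar>(SUP x\<in>S. f x) - (SUP x\<in>S. g x)\<bar> \<le> B"
proof -
  have "(SUP x\<in>S. f x) \<le> (SUP x\<in>S. g x) + B" if "bdd_above (g ` S)" "\<And>x. x \<in> S \<Longrightarrow> f x - g x \<le> B"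
    for f g :: "'a \<Rightarrow> real"
  proof (rule cSUP_least[OF assms(1)])
    fix x assume "x \<in> S"
    with that show "f x \<le> (SUP x\<in>S. g x) + B"
      using cSUP_upper[of x S g] by fastforce
  qed
  from this[of g f] this[of f g] assms show ?thesis
    by (force simp: abs_le_iff)
qed

lemma closure_atLeastAtMost_Int_Rats:
  fixes a b :: real
  assumes "a \<le> b" "a \<in> \<rat>"
  shows "closure ({a..b} \<inter> \<rat>) = {a..b}"
proof (cases "a = b")
  case True
  then show ?thesis
    using assms by simp
next
  case False
  have "{a<..<b} \<subseteq> closure ({a<..<b} \<inter> \<rat>)"
    using open_Int_closure_subset[of "{a<..<b}" \<rat>] by (simp add: Rats_closure_real)
  also have "\<dots> \<subseteq> closure ({a..b} \<inter> \<rat>)"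
    by (intro closure_mono) auto
  finally have "closure {a<..<b} \<subseteq> closure ({a..b} \<inter> \<rat>)"
    by (simp add: closure_minimal)
  moreover have "closure ({a..b} \<inter> \<rat>) \<subseteq> {a..b}"
    by (intro closure_minimal) auto
  ultimately show ?thesis
    using assms False by auto
qed

lemma continuous_on_cSUP_closure:
  fixes f :: "'a::topological_space \<Rightarrow> real"
  assumes "continuous_on (closure D) f" "bdd_above (f ` D)" "D \<noteq> {}"
  shows "(SUP x\<in>closure D. f x) = (SUP x\<in>D. f x)"
proof -
  have le: "f ` closure D \<subseteq> {..(SUP x\<in>D. f x)}"
    using assms by (intro image_closure_subset) (auto intro: cSUP_upper)
  show ?thesis
  proof (rule antisym)
    show "(SUP x\<in>closure D. f x) \<le> (SUP x\<in>D. f x)"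
      using le assms(3) by (intro cSUP_least) auto
    show "(SUP x\<in>D. f x) \<le> (SUP x\<in>closure D. f x)"
      using le assms(3) closure_subset[of D] bdd_above_mono[OF bdd_above_Iic le]
    by (intro cSUP_subset_mono) auto
  qed
qed

lemma running_max_increment:
  fixes f :: "real \<Rightarrow> real"
  assumes f: "continuous_on {a..t} f" and st: "a \<le> s" "s \<le> t"
    and small: "\<And>\<tau>. \<tau> \<in> {s..t} \<Longrightarrow> f \<tau> \<le> f s + e"
  shows "(SUP \<tau>\<in>{a..s}. f \<tau>) \<le> (SUP \<tau>\<in>{a..t}. f \<tau>)"
    and "(SUP \<tau>\<in>{a..t}. f \<tau>) \<le> (SUP \<tau>\<in>{a..s}. f \<tau>) + e"
proof -
  have bdd: "bdd_above (f ` {a..r})" if "r \<le> t" for r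
    by (rule bdd_above_mono[OF bdd_above_continuous_image_atLeastAtMost[OF f]]) (use that in auto)
  show "(SUP \<tau>\<in>{a..s}. f \<tau>) \<le> (SUP \<tau>\<in>{a..t}. f \<tau>)"
    using st bdd[of t] by (intro cSUP_subset_mono) auto
  have fs: "f s \<le> (SUP \<tau>\<in>{a..s}. f \<tau>)"
    using bdd[of s] st by (intro cSUP_upper) auto
  have "f \<tau> \<le> (SUP \<tau>\<in>{a..s}. f \<tau>) + e" if "\<tau> \<in> {a..t}" for \<tau>
  proof (cases "\<tau> \<le> s")
    case True
    then have "f \<tau> \<le> (SUP \<tau>\<in>{a..s}. f \<tau>)"
      using bdd[of s] st that by (intro cSUP_upper) auto
    moreover have "0 \<le> e"
      using small[of s] st by simp
    ultimately show ?thesis by simp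
  next
    case False
    then show ?thesis
      using small[of \<tau>] fs that by simp
  qed
  then show "(SUP \<tau>\<in>{a..t}. f \<tau>) \<le> (SUP \<tau>\<in>{a..s}. f \<tau>) + e"
    using st by (intro cSUP_least) auto
qed

lemma continuous_on_running_max:
  fixes f :: "real \<Rightarrow> real"
  assumes f: "continuous_on {a..b} f"
  shows "continuous_on {a..b} (\<lambda>t. SUP \<tau>\<in>{a..t}. f \<tau>)"
  unfolding continuous_on_iff
proof (intro ballI allI impI)
  fix t e :: real assume t: "t \<in> {a..b}" and e: "0 < e"
  have "uniformly_continuous_on {a..b} f"
    using f by (intro compact_uniformly_continuous) auto
  then obtain d where d: "d > 0"
    "\<And>x x'. x \<in> {a..b} \<Longrightarrow> x' \<in> {a..b} \<Longrightarrow> dist x' x < d \<Longrightarrow> dist (f x') (f x) < e/2"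
    unfolding uniformly_continuous_on_def using e by (meson half_gt_zero)
  have close: "\<bar>(SUP \<tau>\<in>{a..r}. f \<tau>) - (SUP \<tau>\<in>{a..s}. f \<tau>)\<bar> \<le> e/2"
    if "a \<le> s" "s \<le> r" "r \<le> b" "r - s < d" for r s
  proof -
    have "continuous_on {a..r} f"
      by (rule continuous_on_subset[OF f]) (use that in auto)
    moreover have "f \<tau> \<le> f s + e/2" if "\<tau> \<in> {s..r}" for \<tau>
    proof -
      have "dist (f \<tau>) (f s) < e/2"
        using d(2)[of s \<tau>] that \<open>a \<le> s\<close> \<open>r \<le> b\<close> \<open>r - s < d\<close> by (simp add: dist_real_def)
      then show ?thesis
        unfolding dist_real_def by arith
    qed
    ultimately show ?thesis
      using running_max_increment[of a r f s "e/2"] that by fastforce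
  qed
  show "\<exists>d>0. \<forall>s\<in>{a..b}. dist s t < d \<longrightarrow> dist (SUP \<tau>\<in>{a..s}. f \<tau>) (SUP \<tau>\<in>{a..t}. f \<tau>) < e"
  proof (intro exI[of _ d] conjI ballI impI)
    fix s assume "s \<in> {a..b}" "dist s t < d"
    then show "dist (SUP \<tau>\<in>{a..s}. f \<tau>) (SUP \<tau>\<in>{a..t}. f \<tau>) < e"
      using close[of t s] close[of s t] t e by (cases "s \<le> t") (auto simp: dist_real_def abs_minus_commute)
  qed (rule d)
qed

definition phase_profile :: "(real \<Rightarrow> real) \<Rightarrow> real \<Rightarrow> real \<Rightarrow> real \<Rightarrow> real" where
  "phase_profile gp mu rL r = (if r \<le> rL then 1 else gp r / (mu * r))"

lemma phase_field_eq_phase_profile: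
  "phase_field gp mu rL L u y x t = phase_profile gp mu rL (rstar L u t y x)"
  by (simp add: phase_field_def phase_profile_def Let_def)

lemma lipschitz_on_normalized_slope:
  fixes g :: "real \<Rightarrow> real"
  assumes mu: "0 < mu" and a: "0 < a" and g: "K-lipschitz_on {a..} g"
    and g_bounds: "\<And>s. a \<le> s \<Longrightarrow> 0 \<le> g s \<and> g s \<le> mu * s"
  shows "((K + mu) / (mu * a))-lipschitz_on {a..} (\<lambda>r. g r / (mu * r))"
proof (rule lipschitz_onI)
  have K: "0 \<le> K"
    using g by (rule lipschitz_on_nonneg)
  then show "0 \<le> (K + mu) / (mu * a)"
    using mu a by simp
  fix r s assume "r \<in> {a..}" "s \<in> {a..}"
  then have r: "a \<le> r" and s: "a \<le> s" by auto
  have r0: "0 < r" and s0: "0 < s" using r s a by auto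
  have q: "0 \<le> g s / (mu * s)" "g s / (mu * s) \<le> 1"
    using g_bounds[OF s] mu s0 by (auto simp: divide_simps)
  have split: "g r / (mu * r) - g s / (mu * s) = (g r - g s) / (mu * r) + g s / (mu * s) * ((s - r) / r)"
    using r0 s0 mu by (simp add: field_simps)
  have "\<bar>(g r - g s) / (mu * r)\<bar> \<le> K * \<bar>r - s\<bar> / (mu * a)"
  proof -
    have "\<bar>g r - g s\<bar> \<le> K * \<bar>r - s\<bar>"
      using lipschitz_onD[OF g] r s by (simp add: dist_real_def)
    then have "\<bar>(g r - g s) / (mu * r)\<bar> \<le> K * \<bar>r - s\<bar> / (mu * r)"
      using mu r0 by (simp add: abs_divide divide_right_mono)
    also have "\<dots> \<le> K * \<bar>r - s\<bar> / (mu * a)"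
      using K mu a r by (intro divide_left_mono mult_left_mono) auto
    finally show ?thesis .
  qed
  moreover have "\<bar>g s / (mu * s) * ((s - r) / r)\<bar> \<le> mu * \<bar>r - s\<bar> / (mu * a)"
  proof -
    have "\<bar>g s / (mu * s) * ((s - r) / r)\<bar> = g s / (mu * s) * (\<bar>r - s\<bar> / r)"
      using q r0 s0 mu g_bounds[OF s] by (simp add: abs_mult abs_divide abs_minus_commute)
    also have "\<dots> \<le> \<bar>r - s\<bar> / r"
      using q r0 by (intro mult_left_le_one_le) auto
    also have "\<dots> \<le> \<bar>r - s\<bar> / a"
      using a r by (simp add: divide_left_mono)
    finally show ?thesis
      using mu by simp
  qed
  ultimately have "\<bar>g r / (mu * r) - g s / (mu * s)\<bar> \<le> K * \<bar>r - s\<bar> / (mu * a) + mu * \<bar>r - s\<bar> / (mu * a)"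
    unfolding split
    using abs_triangle_ineq[of "(g r - g s) / (mu * r)" "g s / (mu * s) * ((s - r) / r)"] by linarith
  then show "dist (g r / (mu * r)) (g s / (mu * s)) \<le> (K + mu) / (mu * a) * dist r s"
    using mu by (simp add: dist_real_def add_divide_distrib distrib_right)
qed

lemma lipschitz_on_max_const: "1-lipschitz_on UNIV (max (a::real))"
  by (rule lipschitz_onI) (auto simp: dist_real_def)

lemma phase_profile_lipschitz:
  assumes "failure_envelope gp mu rL rC rF"
  shows "\<exists>C. C-lipschitz_on UNIV (phase_profile gp mu rL)"
proof -
  obtain K where K: "\<And>r s. \<bar>gp r - gp s\<bar> \<le> K * \<bar>r - s\<bar>"
    and mu: "0 < mu" and rL: "0 < rL" and lin: "\<And>r. r \<le> rL \<Longrightarrow> gp r = mu * r"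
    and bounds: "\<And>r. 0 \<le> r \<Longrightarrow> 0 \<le> gp r \<and> gp r \<le> mu * r"
    using assms unfolding failure_envelope_def by blast
  have "\<bar>gp r - gp s\<bar> \<le> \<bar>K\<bar> * \<bar>r - s\<bar>" for r s
    using K[of r s] mult_right_mono[OF abs_ge_self abs_ge_zero, of K "r - s"] by linarith
  then have "\<bar>K\<bar>-lipschitz_on {rL..} gp"
    by (intro lipschitz_onI) (auto simp: dist_real_def)
  then have "((\<bar>K\<bar> + mu) / (mu * rL))-lipschitz_on {rL..} (\<lambda>r. gp r / (mu * r))"
    using mu rL bounds by (intro lipschitz_on_normalized_slope) auto
  then have "((\<bar>K\<bar> + mu) / (mu * rL) * 1)-lipschitz_on UNIV (\<lambda>r. gp (max rL r) / (mu * max rL r))"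
    by (intro lipschitz_on_compose2[OF lipschitz_on_max_const]) (auto intro: lipschitz_on_subset)
  moreover have "(\<lambda>r. gp (max rL r) / (mu * max rL r)) = phase_profile gp mu rL"
    using lin[of rL] mu rL by (auto simp: phase_profile_def max_def)
  ultimately show ?thesis
    by metis
qed

lemma norm_le_supnorm:
  assumes "bounded (f ` \<Omega>)" "x \<in> \<Omega>"
  shows "norm (f x) \<le> supnorm \<Omega> f"
  unfolding supnorm_def using assms
  by (intro cSUP_upper bounded_imp_bdd_above) (auto simp: bounded_norm_comp)

lemma supnorm_le:
  assumes "\<Omega> \<noteq> {}" "\<And>x. x \<in> \<Omega> \<Longrightarrow> norm (f x) \<le> B"
  shows "supnorm \<Omega> f \<le> B"
  unfolding supnorm_def using assms by (intro cSUP_least) auto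

lemma supnorm_minus_commute: "supnorm \<Omega> (\<lambda>x. f x - g x) = supnorm \<Omega> (\<lambda>x. g x - f x)"
  unfolding supnorm_def by (simp add: norm_minus_commute)

lemma in_CX_bounded_diff:
  assumes "in_CX \<Omega> T u" "in_CX \<Omega> T w" "s \<in> {0..T}" "t \<in> {0..T}"
  shows "bounded ((\<lambda>x. u s x - w t x) ` \<Omega>)"
  using assms by (intro bounded_minus_comp) (auto simp: in_CX_def in_X_def bounded_iff)

lemma in_CX_pointwise_continuous:
  assumes u: "in_CX \<Omega> T u" and y: "y \<in> \<Omega>"
  shows "continuous_on {0..T} (\<lambda>s. u s y)"
  unfolding continuous_on_iff
proof (intro ballI allI impI)
  fix t e :: real assume t: "t \<in> {0..T}" and e: "0 < e"
  then obtain d where d: "d > 0" "\<forall>s\<in>{0..T}. \<bar>s - t\<bar> < d \<longrightarrow> supnorm \<Omega> (\<lambda>x. u s x - u t x) < e"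
    using u unfolding in_CX_def by blast
  have "dist (u s y) (u t y) < e" if "s \<in> {0..T}" "dist s t < d" for s
    using norm_le_supnorm[OF in_CX_bounded_diff[OF u u that(1) t] y] d(2) that
    by (fastforce simp: dist_norm dist_real_def)
  with d(1) show "\<exists>d>0. \<forall>s\<in>{0..T}. dist s t < d \<longrightarrow> dist (u s y) (u t y) < e"
    by blast
qed

lemma in_CX_supnorm_diff_triangle:
  assumes u: "in_CX \<Omega> T u" and w: "in_CX \<Omega> T w" and "\<Omega> \<noteq> {}"
    and s: "s \<in> {0..T}" and t: "t \<in> {0..T}"
  shows "supnorm \<Omega> (\<lambda>x. u s x - w s x) \<le> supnorm \<Omega> (\<lambda>x. u t x - w t x)
           + supnorm \<Omega> (\<lambda>x. u s x - u t x) + supnorm \<Omega> (\<lambda>x. w t x - w s x)"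
proof (rule supnorm_le[OF \<open>\<Omega> \<noteq> {}\<close>])
  fix x assume x: "x \<in> \<Omega>"
  have "norm (u s x - w s x) \<le> norm (u t x - w t x) + norm (u s x - u t x) + norm (w t x - w s x)"
    using norm_triangle_ineq[of "u t x - w t x + (u s x - u t x)" "w t x - w s x"]
      norm_triangle_ineq[of "u t x - w t x" "u s x - u t x"] by (simp add: algebra_simps)
  also have "\<dots> \<le> supnorm \<Omega> (\<lambda>x. u t x - w t x) + supnorm \<Omega> (\<lambda>x. u s x - u t x)
                  + supnorm \<Omega> (\<lambda>x. w t x - w s x)"
    using x s t u w
    by (intro add_mono norm_le_supnorm[where f = "\<lambda>x. _ x - _ x"] in_CX_bounded_diff) auto
  finally show "norm (u s x - w s x) \<le> \<dots>" .
qed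

lemma in_CX_supnorm_diff_continuous:
  assumes u: "in_CX \<Omega> T u" and w: "in_CX \<Omega> T w" and ne: "\<Omega> \<noteq> {}"
  shows "continuous_on {0..T} (\<lambda>t. supnorm \<Omega> (\<lambda>x. u t x - w t x))"
  unfolding continuous_on_iff
proof (intro ballI allI impI)
  fix t e :: real assume t: "t \<in> {0..T}" and e: "0 < e"
  obtain d1 where d1: "d1 > 0" "\<forall>s\<in>{0..T}. \<bar>s - t\<bar> < d1 \<longrightarrow> supnorm \<Omega> (\<lambda>x. u s x - u t x) < e/2"
    using u t e unfolding in_CX_def by (meson half_gt_zero)
  obtain d2 where d2: "d2 > 0" "\<forall>s\<in>{0..T}. \<bar>s - t\<bar> < d2 \<longrightarrow> supnorm \<Omega> (\<lambda>x. w s x - w t x) < e/2"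
    using w t e unfolding in_CX_def by (meson half_gt_zero)
  have "dist (supnorm \<Omega> (\<lambda>x. u s x - w s x)) (supnorm \<Omega> (\<lambda>x. u t x - w t x)) < e"
    if s: "s \<in> {0..T}" "dist s t < min d1 d2" for s
  proof -
    have "supnorm \<Omega> (\<lambda>x. u s x - u t x) < e/2" "supnorm \<Omega> (\<lambda>x. w s x - w t x) < e/2"
      using d1(2) d2(2) s by (auto simp: dist_real_def)
    moreover have "supnorm \<Omega> (\<lambda>x. u t x - u s x) = supnorm \<Omega> (\<lambda>x. u s x - u t x)"
      "supnorm \<Omega> (\<lambda>x. w t x - w s x) = supnorm \<Omega> (\<lambda>x. w s x - w t x)"
      by (rule supnorm_minus_commute)+
    ultimately show ?thesis
      using in_CX_supnorm_diff_triangle[OF u w ne s(1) t] in_CX_supnorm_diff_triangle[OF u w ne t s(1)]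
      by (simp add: dist_real_def abs_less_iff)
  qed
  then show "\<exists>d>0. \<forall>s\<in>{0..T}. dist s t < d \<longrightarrow>
      dist (supnorm \<Omega> (\<lambda>x. u s x - w s x)) (supnorm \<Omega> (\<lambda>x. u t x - w t x)) < e"
    using d1(1) d2(1) by (intro exI[of _ "min d1 d2"]) auto
qed

lemma in_CX_norm_diff_le_CX_norm:
  assumes u: "in_CX \<Omega> T u" and w: "in_CX \<Omega> T w" and "\<Omega> \<noteq> {}"
    and \<tau>: "\<tau> \<in> {0..T}" and z: "z \<in> \<Omega>"
  shows "norm (u \<tau> z - w \<tau> z) \<le> CX_norm \<Omega> T (\<lambda>s x. u s x - w s x)"
proof -
  have "norm (u \<tau> z - w \<tau> z) \<le> supnorm \<Omega> (\<lambda>x. u \<tau> x - w \<tau> x)"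
    using in_CX_bounded_diff[OF u w \<tau> \<tau>] z by (rule norm_le_supnorm)
  also have "\<dots> \<le> CX_norm \<Omega> T (\<lambda>s x. u s x - w s x)"
    unfolding CX_norm_def using \<tau> bdd_above_continuous_image_atLeastAtMost[OF in_CX_supnorm_diff_continuous[OF assms(1-3)]]
    by (intro cSUP_upper) auto
  finally show ?thesis .
qed

lemma strain_diff_abs_le:
  fixes u w :: "'a::euclidean_space \<Rightarrow> 'a"
  assumes "norm (u y - w y) \<le> B" "norm (u x - w x) \<le> B"
  shows "\<bar>strain u y x - strain w y x\<bar> \<le> 2 * B / dist y x"
proof -
  define e where "e = (y - x) /\<^sub>R norm (y - x)"
  have "norm e \<le> 1"
    unfolding e_def by (cases "y = x") auto
  have "strain v y x = ((v y - v x) \<bullet> e) / norm (y - x)" for v :: "'a \<Rightarrow> 'a"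
    by (simp add: strain_def e_def)
  moreover have "(u y - w y) - (u x - w x) = (u y - u x) - (w y - w x)"
    by (simp add: algebra_simps)
  ultimately have "strain u y x - strain w y x = (((u y - w y) - (u x - w x)) \<bullet> e) / norm (y - x)"
    by (simp add: inner_diff_left diff_divide_distrib)
  moreover have "\<bar>((u y - w y) - (u x - w x)) \<bullet> e\<bar> \<le> 2 * B"
  proof -
    have "\<bar>((u y - w y) - (u x - w x)) \<bullet> e\<bar> \<le> norm ((u y - w y) - (u x - w x)) * norm e"
      by (rule Cauchy_Schwarz_ineq2)
    also have "\<dots> \<le> norm ((u y - w y) - (u x - w x))"
      using \<open>norm e \<le> 1\<close> by (intro mult_left_le) auto
    also have "\<dots> \<le> 2 * B"
      using assms norm_triangle_ineq4[of "u y - w y" "u x - w x"] by simp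
    finally show ?thesis .
  qed
  ultimately show ?thesis
    by (simp add: abs_divide divide_right_mono dist_norm)
qed

lemma in_CX_strain_continuous:
  assumes "in_CX \<Omega> T u" "y \<in> \<Omega>" "x \<in> \<Omega>"
  shows "continuous_on {0..T} (\<lambda>s. strain (u s) y x)"
proof -
  have "continuous_on {0..T} (\<lambda>s. ((u s y - u s x) \<bullet> ((y - x) /\<^sub>R norm (y - x))) * (1 / norm (y - x)))"
    using in_CX_pointwise_continuous[OF assms(1,2)] in_CX_pointwise_continuous[OF assms(1,3)]
    by (intro continuous_intros)
  then show ?thesis
    by (simp add: strain_def)
qed

lemma mem_strain_eq_SUP_Rats:
  assumes "in_CX \<Omega> T u" "y \<in> \<Omega>" "x \<in> \<Omega>" "t \<in> {0..T}"
  shows "mem_strain u t y x = (SUP \<tau>\<in>{0..t} \<inter> \<rat>. strain (u \<tau>) y x)"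
proof -
  have closure: "closure ({0..t} \<inter> \<rat>) = {0..t}"
    using assms(4) by (intro closure_atLeastAtMost_Int_Rats) auto
  have cont: "continuous_on {0..t} (\<lambda>\<tau>. strain (u \<tau>) y x)"
    using in_CX_strain_continuous[OF assms(1-3)] by (rule continuous_on_subset) (use assms(4) in auto)
  have "mem_strain u t y x = (SUP \<tau>\<in>closure ({0..t} \<inter> \<rat>). strain (u \<tau>) y x)"
    by (simp only: mem_strain_def closure)
  also have "\<dots> = (SUP \<tau>\<in>{0..t} \<inter> \<rat>. strain (u \<tau>) y x)"
  proof (rule continuous_on_cSUP_closure)
    show "bdd_above ((\<lambda>\<tau>. strain (u \<tau>) y x) ` ({0..t} \<inter> \<rat>))"
      by (rule bdd_above_mono[OF bdd_above_continuous_image_atLeastAtMost[OF cont]]) auto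
  qed (use cont closure assms(4) in auto)
  finally show ?thesis .
qed

lemma mem_strain_measurable:
  assumes u: "in_CX \<Omega> T u" and t: "t \<in> {0..T}"
  shows "(\<lambda>p. mem_strain u t (fst p) (snd p)) \<in> borel_measurable (lebesgue_on (\<Omega> \<times> \<Omega>))"
proof -
  have "(\<lambda>p. SUP \<tau>\<in>{0..t} \<inter> \<rat>. strain (u \<tau>) (fst p) (snd p)) \<in> borel_measurable (lebesgue_on (\<Omega> \<times> \<Omega>))"
  proof (rule borel_measurable_cSUP)
    show "countable ({0..t} \<inter> \<rat>)"
      by (simp add: countable_rat)
    fix \<tau> assume "\<tau> \<in> {0..t} \<inter> \<rat>"
    then have "in_X \<Omega> (u \<tau>)"
      using u t unfolding in_CX_def by auto
    then show "(\<lambda>p. strain (u \<tau>) (fst p) (snd p)) \<in> borel_measurable (lebesgue_on (\<Omega> \<times> \<Omega>))"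
      unfolding in_X_def by (intro strain_measurable) auto
  next
    fix p assume "p \<in> space (lebesgue_on (\<Omega> \<times> \<Omega>))"
    then have "continuous_on {0..T} (\<lambda>\<tau>. strain (u \<tau>) (fst p) (snd p))"
      using in_CX_strain_continuous[OF u] by auto
    then show "bdd_above ((\<lambda>\<tau>. strain (u \<tau>) (fst p) (snd p)) ` ({0..t} \<inter> \<rat>))"
      by (rule bdd_above_mono[OF bdd_above_continuous_image_atLeastAtMost]) (use t in auto)
  qed
  then show ?thesis
    by (rule measurable_cong[THEN iffD1, rotated]) (use mem_strain_eq_SUP_Rats[OF u _ _ t] in auto)
qed

lemma phase_field_measurable:
  assumes "failure_envelope gp mu rL rC rF" "in_CX \<Omega> T u" "t \<in> {0..T}"
  shows "(\<lambda>p. phase_field gp mu rL L u (fst p) (snd p) t) \<in> borel_measurable (lebesgue_on (\<Omega> \<times> \<Omega>))"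
proof -
  obtain C where "C-lipschitz_on UNIV (phase_profile gp mu rL)"
    using phase_profile_lipschitz[OF assms(1)] by blast
  then have [measurable]: "phase_profile gp mu rL \<in> borel_measurable borel"
    by (intro borel_measurable_continuous_onI lipschitz_on_continuous_on)
  have [measurable]: "(\<lambda>p. mem_strain u t (fst p) (snd p)) \<in> borel_measurable (lebesgue_on (\<Omega> \<times> \<Omega>))"
    using assms(2,3) by (rule mem_strain_measurable)
  show ?thesis
    unfolding phase_field_eq_phase_profile rstar_def by measurable
qed

lemma phase_field_continuous:
  assumes "failure_envelope gp mu rL rC rF" "in_CX \<Omega> T u" "y \<in> \<Omega>" "x \<in> \<Omega>"
  shows "continuous_on {0..T} (\<lambda>t. phase_field gp mu rL L u y x t)"
proof -
  obtain C where "C-lipschitz_on UNIV (phase_profile gp mu rL)"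
    using phase_profile_lipschitz[OF assms(1)] by blast
  then have "continuous_on UNIV (phase_profile gp mu rL)"
    by (rule lipschitz_on_continuous_on)
  moreover have "continuous_on {0..T} (\<lambda>t. rstar L u t y x)"
    unfolding rstar_def mem_strain_def
    using continuous_on_running_max[OF in_CX_strain_continuous[OF assms(2-4)]]
    by (intro continuous_intros)
  ultimately show ?thesis
    unfolding phase_field_eq_phase_profile by (rule continuous_on_compose2) auto
qed

lemma mem_strain_diff_abs_le:
  assumes u: "in_CX \<Omega> T u" and w: "in_CX \<Omega> T w" and "\<Omega> \<noteq> {}"
    and yx: "y \<in> \<Omega>" "x \<in> \<Omega>" and t: "t \<in> {0..T}"
  shows "\<bar>mem_strain u t y x - mem_strain w t y x\<bar> \<le> 2 * CX_norm \<Omega> T (\<lambda>s x. u s x - w s x) / dist y x"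
  unfolding mem_strain_def
proof (rule cSUP_abs_diff_le)
  have "continuous_on {0..t} (\<lambda>\<tau>. strain (v \<tau>) y x)" if "in_CX \<Omega> T v" for v
    using in_CX_strain_continuous[OF that yx] by (rule continuous_on_subset) (use t in auto)
  then show "bdd_above ((\<lambda>\<tau>. strain (u \<tau>) y x) ` {0..t})" "bdd_above ((\<lambda>\<tau>. strain (w \<tau>) y x) ` {0..t})"
    using u w by (auto intro: bdd_above_continuous_image_atLeastAtMost)
  show "\<bar>strain (u \<tau>) y x - strain (w \<tau>) y x\<bar> \<le> 2 * CX_norm \<Omega> T (\<lambda>s x. u s x - w s x) / dist y x"
    if "\<tau> \<in> {0..t}" for \<tau>
    using that t yx by (intro strain_diff_abs_le in_CX_norm_diff_le_CX_norm[OF u w \<open>\<Omega> \<noteq> {}\<close>]) auto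
qed (use t in auto)

lemma rstar_diff_abs_le:
  assumes u: "in_CX \<Omega> T u" and w: "in_CX \<Omega> T w" and "\<Omega> \<noteq> {}"
    and yx: "y \<in> \<Omega>" "x \<in> \<Omega>" and t: "t \<in> {0..T}" and "L > 0" and "dist y x < \<epsilon>"
  shows "\<bar>rstar L u t y x - rstar L w t y x\<bar>
           \<le> CX_norm \<Omega> T (\<lambda>s x. u s x - w s x) * (2 * sqrt (\<epsilon> / L) / dist y x)"
proof -
  define N where "N = CX_norm \<Omega> T (\<lambda>s x. u s x - w s x)"
  have "0 \<le> N"
    unfolding N_def using order_trans[OF norm_ge_zero in_CX_norm_diff_le_CX_norm[OF u w \<open>\<Omega> \<noteq> {}\<close> t yx(1)]] .
  have "\<bar>rstar L u t y x - rstar L w t y x\<bar> = sqrt (dist y x / L) * \<bar>mem_strain u t y x - mem_strain w t y x\<bar>"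
    unfolding rstar_def using \<open>L > 0\<close> by (simp add: dist_norm abs_mult flip: right_diff_distrib)
  also have "\<dots> \<le> sqrt (dist y x / L) * (2 * N / dist y x)"
    unfolding N_def using \<open>L > 0\<close> by (intro mult_left_mono mem_strain_diff_abs_le assms) auto
  also have "\<dots> \<le> sqrt (\<epsilon> / L) * (2 * N / dist y x)"
    using assms(7,8) \<open>0 \<le> N\<close> by (intro mult_right_mono) (auto simp: divide_right_mono)
  finally show ?thesis
    by (simp add: N_def mult_ac)
qed

lemma phase_field_diff_abs_le:
  assumes Lh: "Lh-lipschitz_on UNIV (phase_profile gp mu rL)"
    and "in_CX \<Omega> T u" "in_CX \<Omega> T w" "\<Omega> \<noteq> {}" "y \<in> \<Omega>" "x \<in> \<Omega>" "t \<in> {0..T}" "L > 0"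
    and "dist y x < \<epsilon>"
  shows "\<bar>phase_field gp mu rL L u y x t - phase_field gp mu rL L w y x t\<bar>
           \<le> CX_norm \<Omega> T (\<lambda>s x. u s x - w s x) * (2 * Lh * sqrt (\<epsilon> / L) / dist y x)"
proof -
  have "\<bar>phase_field gp mu rL L u y x t - phase_field gp mu rL L w y x t\<bar>
          \<le> Lh * \<bar>rstar L u t y x - rstar L w t y x\<bar>"
    using lipschitz_onD[OF Lh] by (simp add: phase_field_eq_phase_profile dist_real_def)
  also have "\<dots> \<le> Lh * (CX_norm \<Omega> T (\<lambda>s x. u s x - w s x) * (2 * sqrt (\<epsilon> / L) / dist y x))"
    using lipschitz_on_nonneg[OF Lh] by (intro mult_left_mono rstar_diff_abs_le assms(2-)) auto
  finally show ?thesis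
    by (simp add: mult_ac)
qed

theorem mainTheorem2:
  fixes \<Omega> :: "'a::euclidean_space set"
    and gp :: "real \<Rightarrow> real"
    and mu rL rC rF L \<epsilon> T :: real
  assumes dim: "DIM('a) = 2 \<or> DIM('a) = 3"
    and dom: "open \<Omega>" "connected \<Omega>" "bounded \<Omega>" "\<Omega> \<noteq> {}"
    and eps: "\<epsilon> > 0" and Lpos: "L > 0"
    and env: "failure_envelope gp mu rL rC rF"
    and Tpos: "T > 0"
  shows
    "(\<forall>u. in_CX \<Omega> T u \<longrightarrow>
        (\<forall>t\<in>{0..T}. (\<lambda>p. phase_field gp mu rL L u (fst p) (snd p) t)
                       \<in> borel_measurable (lebesgue_on (\<Omega> \<times> \<Omega>))) \<and>
        (AE p in lebesgue_on (\<Omega> \<times> \<Omega>).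
           continuous_on {0..T} (\<lambda>t. phase_field gp mu rL L u (fst p) (snd p) t)))
     \<and>
     (\<exists>C. \<forall>u w. in_CX \<Omega> T u \<longrightarrow> in_CX \<Omega> T w \<longrightarrow>
        (AE p in lebesgue_on (\<Omega> \<times> \<Omega>). dist (fst p) (snd p) < \<epsilon> \<longrightarrow>
           (\<forall>t\<in>{0..T}.
              \<bar>phase_field gp mu rL L u (fst p) (snd p) t - phase_field gp mu rL L w (fst p) (snd p) t\<bar>
              \<le> CX_norm \<Omega> T (\<lambda>s x. u s x - w s x) * (C / dist (fst p) (snd p)))))"
proof (intro conjI allI impI)
  fix u assume u: "in_CX \<Omega> T u"
  show "\<forall>t\<in>{0..T}. (\<lambda>p. phase_field gp mu rL L u (fst p) (snd p) t)
                       \<in> borel_measurable (lebesgue_on (\<Omega> \<times> \<Omega>))"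
    using phase_field_measurable[OF env u] by blast
  show "AE p in lebesgue_on (\<Omega> \<times> \<Omega>). continuous_on {0..T} (\<lambda>t. phase_field gp mu rL L u (fst p) (snd p) t)"
    by (rule AE_I2) (use phase_field_continuous[OF env u] in auto)
next
  obtain Lh where Lh: "Lh-lipschitz_on UNIV (phase_profile gp mu rL)"
    using phase_profile_lipschitz[OF env] by blast
  show "\<exists>C. \<forall>u w. in_CX \<Omega> T u \<longrightarrow> in_CX \<Omega> T w \<longrightarrow>
        (AE p in lebesgue_on (\<Omega> \<times> \<Omega>). dist (fst p) (snd p) < \<epsilon> \<longrightarrow>
           (\<forall>t\<in>{0..T}.
              \<bar>phase_field gp mu rL L u (fst p) (snd p) t - phase_field gp mu rL L w (fst p) (snd p) t\<bar>
              \<le> CX_norm \<Omega> T (\<lambda>s x. u s x - w s x) * (C / dist (fst p) (snd p))))"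
    using phase_field_diff_abs_le[OF Lh _ _ dom(4) _ _ _ Lpos]
    by (intro exI[of _ "2 * Lh * sqrt (\<epsilon> / L)"] allI impI AE_I2 ballI) auto
qed

end
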